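(* Fix real numbers $\{\Theta_{kj}\}_{k,j\in[K]}$. For $\mathbf{P}\in[0,1]^K$ and $(\boldsymbol{\alpha},\boldsymbol{\gamma})\in[-\pi,\pi)^{2K}$ let $\beta_{kj}=\cos^2(\alpha_j+\Theta_{kj}-\Theta_{jj}-\gamma_k)$ and $R_{sum}(\mathbf{P},\boldsymbol{\alpha},\boldsymbol{\gamma})=\sum_{k=1}^K\ln\!\left(1+\frac{P_k\beta_{kk}}{\sum_{j\ne k}P_j\beta_{kj}+\frac12}\right)$. Then for any $\mathbf{P}\in[0,1]^K$ and $(\boldsymbol{\alpha},\boldsymbol{\gamma})\in[-\pi,\pi)^{2K}$, $$R_{sum}(\mathbf{P},\boldsymbol{\alpha},\boldsymbol{\gamma})\le 2\max_{\mathcal{S}\subset[K]}R_{sum}(\mathbf{1}_{\mathcal{S}},\boldsymbol{\alpha},\boldsymbol{\gamma}),$$ where $\mathbf{1}_{\mathcal{S}}\in\{0,1\}^K$ has $k$-th component $1$ if $k\in\mathcal{S}$ and $0$ otherwise. *)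

theory Defs
  imports "HOL-Analysis.Analysis"
begin

definition beta :: "(nat \<Rightarrow> nat \<Rightarrow> real) \<Rightarrow> (nat \<Rightarrow> real) \<Rightarrow> (nat \<Rightarrow> real) \<Rightarrow> nat \<Rightarrow> nat \<Rightarrow> real" where
  "beta \<Theta> \<alpha> \<gamma> k j = (cos (\<alpha> j + \<Theta> k j - \<Theta> j j - \<gamma> k))\<^sup>2"

definition Rsum :: "nat \<Rightarrow> (nat \<Rightarrow> nat \<Rightarrow> real) \<Rightarrow> (nat \<Rightarrow> real) \<Rightarrow> (nat \<Rightarrow> real) \<Rightarrow> (nat \<Rightarrow> real) \<Rightarrow> real" where
  "Rsum K \<Theta> P \<alpha> \<gamma> = (\<Sum>k\<in>{1..K}. ln (1 + P k * beta \<Theta> \<alpha> \<gamma> k k /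
      ((\<Sum>j\<in>{1..K} - {k}. P j * beta \<Theta> \<alpha> \<gamma> k j) + 1/2)))"

definition indic_vec :: "nat set \<Rightarrow> nat \<Rightarrow> real" where
  "indic_vec S k = (if k \<in> S then 1 else 0)"

end

theory Submission
  imports Defs
begin

text \<open>Replace every summand \<open>ln (1 + P\<^sub>k x\<^sub>k)\<close> of the sum rate, where \<open>x\<^sub>k \<le> 2\<close> is the
  full-power SINR, by \<open>P\<^sub>k ln (1 + x\<^sub>k)\<close>. Since \<open>ln (1 + p x) \<le> p x \<le> 2 p ln (1 + x)\<close> for
  \<open>x \<in> [0, 2]\<close>, this loses at most a factor 2, and on binary power vectors nothing is lost.
  The surrogate is convex in each single power \<open>P\<^sub>m\<close>: its own summand is linear in \<open>P\<^sub>m\<close>, and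
  every other summand is the convex function \<open>x \<mapsto> ln (1 + b / x)\<close> of an interference term
  that is affine in \<open>P\<^sub>m\<close>. A coordinate-wise convex function on the cube is maximised at a
  vertex.\<close>

lemma le_2_ln_one_plus:
  fixes x :: real
  assumes "0 \<le> x" "x \<le> 2"
  shows "x \<le> 2 * ln (1 + x)"
proof -
  have "exp ((1 - x/2) *\<^sub>R 0 + (x/2) *\<^sub>R 1) \<le> (1 - x/2) * exp 0 + (x/2) * exp 1"
    using convex_onD[OF exp_convex, of "x/2" 0 1] assms by simp
  also have "\<dots> \<le> 1 + x"
    using mult_left_mono[OF exp_le, of x] assms by simp
  finally have "exp (x/2) \<le> 1 + x" by simp
  then have "ln (exp (x/2)) \<le> ln (1 + x)"
    using assms by (subst ln_le_cancel_iff) auto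
  then show ?thesis by simp
qed

lemma ln_one_plus_mult_le:
  fixes p x :: real
  assumes "0 \<le> p" "p \<le> 1" "0 \<le> x" "x \<le> 2"
  shows "ln (1 + p * x) \<le> 2 * (p * ln (1 + x))"
proof -
  have "ln (1 + p * x) \<le> p * x"
    using assms by (intro ln_add_one_self_le_self) simp
  also have "\<dots> \<le> p * (2 * ln (1 + x))"
    using le_2_ln_one_plus[OF assms(3,4)] assms(1) by (rule mult_left_mono)
  finally show ?thesis by simp
qed

lemma convex_on_ln_one_plus_divide:
  fixes b :: real
  assumes "0 \<le> b"
  shows "convex_on {0<..} (\<lambda>x. ln (1 + b / x))"
proof (rule convex_on_realI[where f' = "\<lambda>x. - b / (x * (x + b))"])
  fix x :: real assume "x \<in> {0<..}"
  then have "0 < x" "0 < 1 + b / x" using assms by (simp_all add: add_pos_nonneg)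
  then have "((\<lambda>x. ln (1 + b / x)) has_real_derivative - (b / x\<^sup>2) / (1 + b / x)) (at x)"
    by (auto intro!: derivative_eq_intros simp: power2_eq_square)
  moreover have "- (b / x\<^sup>2) / (1 + b / x) = - b / (x * (x + b))"
    using \<open>0 < x\<close> assms by (simp add: field_simps power2_eq_square)
  ultimately show "((\<lambda>x. ln (1 + b / x)) has_real_derivative - b / (x * (x + b))) (at x)"
    by metis
next
  fix x y :: real assume "x \<in> {0<..}" "y \<in> {0<..}" "x \<le> y"
  then have "0 < x * (x + b)" "x * (x + b) \<le> y * (y + b)"
    using assms by (simp_all add: add_pos_nonneg mult_mono)
  then have "b / (y * (y + b)) \<le> b / (x * (x + b))"
    using assms by (intro divide_left_mono) simp_all
  then show "- b / (x * (x + b)) \<le> - b / (y * (y + b))" by simp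
qed simp

lemma coordinatewise_convex_le_vertex:
  fixes f :: "('a \<Rightarrow> real) \<Rightarrow> real"
  assumes "finite I"
    and local: "\<And>P Q. (\<And>k. k \<in> I \<Longrightarrow> P k = Q k) \<Longrightarrow> f P = f Q"
    and convex: "\<And>P m. (\<And>k. k \<in> I \<Longrightarrow> 0 \<le> P k \<and> P k \<le> 1) \<Longrightarrow> m \<in> I \<Longrightarrow>
      f P \<le> (1 - P m) * f (P(m := 0)) + P m * f (P(m := 1))"
    and cube: "\<And>k. k \<in> I \<Longrightarrow> 0 \<le> P k \<and> P k \<le> 1"
  shows "\<exists>S\<subseteq>I. f P \<le> f (\<lambda>k. of_bool (k \<in> S))"
proof -
  have "\<exists>S\<subseteq>I. f P \<le> f (\<lambda>k. of_bool (k \<in> S))"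
    if "finite M" "\<And>k. k \<in> I \<Longrightarrow> 0 \<le> P k \<and> P k \<le> 1"
      "\<And>k. k \<in> I - M \<Longrightarrow> P k = 0 \<or> P k = 1" for M and P :: "'a \<Rightarrow> real"
    using that
  proof (induction M arbitrary: P rule: finite_induct)
    case empty
    then have "f P = f (\<lambda>k. of_bool (k \<in> {k \<in> I. P k = 1}))"
      by (intro local) auto
    then show ?case by (intro exI[of _ "{k \<in> I. P k = 1}"]) auto
  next
    case (insert m M)
    show ?case
    proof (cases "m \<in> I")
      case False
      then show ?thesis by (intro insert.IH) (use insert.prems in auto)
    next
      case True
      have "\<exists>S\<subseteq>I. f (P(m := 0)) \<le> f (\<lambda>k. of_bool (k \<in> S))"
        using insert.prems by (intro insert.IH) auto
      then obtain S0 where S0: "S0 \<subseteq> I" "f (P(m := 0)) \<le> f (\<lambda>k. of_bool (k \<in> S0))"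
        by blast
      have "\<exists>S\<subseteq>I. f (P(m := 1)) \<le> f (\<lambda>k. of_bool (k \<in> S))"
        using insert.prems by (intro insert.IH) auto
      then obtain S1 where S1: "S1 \<subseteq> I" "f (P(m := 1)) \<le> f (\<lambda>k. of_bool (k \<in> S1))"
        by blast
      define g0 where "g0 = f (\<lambda>k. of_bool (k \<in> S0))"
      define g1 where "g1 = f (\<lambda>k. of_bool (k \<in> S1))"
      have t: "0 \<le> P m" "P m \<le> 1" using insert.prems True by auto
      have "f P \<le> (1 - P m) * f (P(m := 0)) + P m * f (P(m := 1))"
        using convex[OF insert.prems(1) True] .
      also have "\<dots> \<le> (1 - P m) * max g0 g1 + P m * max g0 g1"
        using S0(2) S1(2) t unfolding g0_def g1_def by (intro add_mono mult_left_mono) auto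
      also have "\<dots> = max g0 g1" by (simp add: algebra_simps)
      finally have "f P \<le> max g0 g1" .
      show ?thesis
      proof (cases "g0 \<le> g1")
        case True
        with \<open>f P \<le> max g0 g1\<close> show ?thesis
          unfolding g1_def by (intro exI[of _ S1] conjI S1(1)) simp
      next
        case False
        with \<open>f P \<le> max g0 g1\<close> show ?thesis
          unfolding g0_def by (intro exI[of _ S0] conjI S0(1)) simp
      qed
    qed
  qed
  from this[OF assms(1) cube] show ?thesis by simp
qed

lemma beta_nonneg: "0 \<le> beta \<Theta> \<alpha> \<gamma> k j"
  by (simp add: beta_def)

lemma beta_le_one: "beta \<Theta> \<alpha> \<gamma> k j \<le> 1"
  by (simp add: beta_def abs_square_le_1)

definition interference_plus_noise ::
    "nat \<Rightarrow> (nat \<Rightarrow> nat \<Rightarrow> real) \<Rightarrow> (nat \<Rightarrow> real) \<Rightarrow> (nat \<Rightarrow> real) \<Rightarrow> (nat \<Rightarrow> real) \<Rightarrow> nat \<Rightarrow> real"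
  where "interference_plus_noise K \<Theta> P \<alpha> \<gamma> k =
    (\<Sum>j\<in>{1..K} - {k}. P j * beta \<Theta> \<alpha> \<gamma> k j) + 1/2"

definition rate_surrogate ::
    "nat \<Rightarrow> (nat \<Rightarrow> nat \<Rightarrow> real) \<Rightarrow> (nat \<Rightarrow> real) \<Rightarrow> (nat \<Rightarrow> real) \<Rightarrow> (nat \<Rightarrow> real) \<Rightarrow> real"
  where "rate_surrogate K \<Theta> P \<alpha> \<gamma> =
    (\<Sum>k\<in>{1..K}. P k * ln (1 + beta \<Theta> \<alpha> \<gamma> k k / interference_plus_noise K \<Theta> P \<alpha> \<gamma> k))"

lemma interference_plus_noise_ge_half:
  assumes "\<And>j. j \<in> {1..K} \<Longrightarrow> 0 \<le> P j"
  shows "1/2 \<le> interference_plus_noise K \<Theta> P \<alpha> \<gamma> k"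
proof -
  have "0 \<le> (\<Sum>j\<in>{1..K} - {k}. P j * beta \<Theta> \<alpha> \<gamma> k j)"
    using assms beta_nonneg by (intro sum_nonneg mult_nonneg_nonneg) auto
  then show ?thesis unfolding interference_plus_noise_def by simp
qed

lemma interference_plus_noise_cong:
  "(\<And>j. j \<in> {1..K} \<Longrightarrow> P j = Q j) \<Longrightarrow>
    interference_plus_noise K \<Theta> P \<alpha> \<gamma> k = interference_plus_noise K \<Theta> Q \<alpha> \<gamma> k"
  unfolding interference_plus_noise_def by (intro arg_cong2[where f = "(+)"] sum.cong) auto

lemma interference_plus_noise_fun_upd:
  assumes "m \<in> {1..K}"
  shows "interference_plus_noise K \<Theta> (P(m := s)) \<alpha> \<gamma> k =
    interference_plus_noise K \<Theta> (P(m := 0)) \<alpha> \<gamma> k + (if m = k then 0 else s * beta \<Theta> \<alpha> \<gamma> k m)"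
proof (cases "m = k")
  case True
  then show ?thesis by (simp add: interference_plus_noise_def)
next
  case False
  then have m: "m \<in> {1..K} - {k}" using assms by simp
  have "(\<Sum>j\<in>{1..K} - {k}. (P(m := s)) j * beta \<Theta> \<alpha> \<gamma> k j)
      = s * beta \<Theta> \<alpha> \<gamma> k m + (\<Sum>j\<in>{1..K} - {k} - {m}. P j * beta \<Theta> \<alpha> \<gamma> k j)" for s
    by (subst sum.remove[OF _ m]) (auto intro!: sum.cong)
  then show ?thesis using False by (simp add: interference_plus_noise_def)
qed

lemma interference_plus_noise_convex_combination:
  assumes "m \<in> {1..K}"
  shows "interference_plus_noise K \<Theta> P \<alpha> \<gamma> k =
    (1 - P m) * interference_plus_noise K \<Theta> (P(m := 0)) \<alpha> \<gamma> k
      + P m * interference_plus_noise K \<Theta> (P(m := 1)) \<alpha> \<gamma> k"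
  using interference_plus_noise_fun_upd[OF assms, of \<Theta> P "P m"]
    interference_plus_noise_fun_upd[OF assms, of \<Theta> P 1]
  by (simp add: algebra_simps)

lemma rate_surrogate_cong:
  assumes "\<And>j. j \<in> {1..K} \<Longrightarrow> P j = Q j"
  shows "rate_surrogate K \<Theta> P \<alpha> \<gamma> = rate_surrogate K \<Theta> Q \<alpha> \<gamma>"
proof -
  have "interference_plus_noise K \<Theta> P \<alpha> \<gamma> k = interference_plus_noise K \<Theta> Q \<alpha> \<gamma> k" for k
    using assms by (rule interference_plus_noise_cong)
  then show ?thesis unfolding rate_surrogate_def using assms by (intro sum.cong) auto
qed

lemma rate_surrogate_coordinate_convex:
  assumes P: "\<And>j. j \<in> {1..K} \<Longrightarrow> 0 \<le> P j \<and> P j \<le> 1" and m: "m \<in> {1..K}"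
  shows "rate_surrogate K \<Theta> P \<alpha> \<gamma> \<le>
    (1 - P m) * rate_surrogate K \<Theta> (P(m := 0)) \<alpha> \<gamma> + P m * rate_surrogate K \<Theta> (P(m := 1)) \<alpha> \<gamma>"
proof -
  let ?D = "\<lambda>Q k. interference_plus_noise K \<Theta> Q \<alpha> \<gamma> k"
  let ?r = "\<lambda>Q k. ln (1 + beta \<Theta> \<alpha> \<gamma> k k / ?D Q k)"
  have t: "0 \<le> P m" "P m \<le> 1" using P m by auto
  have "P k * ?r P k \<le> (1 - P m) * ((P(m := 0)) k * ?r (P(m := 0)) k)
      + P m * ((P(m := 1)) k * ?r (P(m := 1)) k)" if k: "k \<in> {1..K}" for k
  proof (cases "k = m")
    case True
    have "?D (P(m := 1)) k = ?D P k"
      using interference_plus_noise_fun_upd[OF m, of \<Theta> P 1]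
        interference_plus_noise_fun_upd[OF m, of \<Theta> P "P m"] True by simp
    then show ?thesis using True by simp
  next
    case False
    have "1/2 \<le> ?D (P(m := 0)) k"
      by (rule interference_plus_noise_ge_half) (use P in auto)
    moreover have "1/2 \<le> ?D (P(m := 1)) k"
      by (rule interference_plus_noise_ge_half) (use P in auto)
    ultimately have "?D (P(m := 0)) k \<in> {0<..}" "?D (P(m := 1)) k \<in> {0<..}" by simp_all
    from convex_onD[OF convex_on_ln_one_plus_divide[OF beta_nonneg] t this]
    have "?r P k \<le> (1 - P m) * ?r (P(m := 0)) k + P m * ?r (P(m := 1)) k"
      unfolding interference_plus_noise_convex_combination[OF m, of \<Theta> P \<alpha> \<gamma> k] by simp
    then have "P k * ?r P k \<le> P k * ((1 - P m) * ?r (P(m := 0)) k + P m * ?r (P(m := 1)) k)"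
      using P k by (simp add: mult_left_mono)
    then show ?thesis using False by (simp add: algebra_simps)
  qed
  then have "rate_surrogate K \<Theta> P \<alpha> \<gamma> \<le> (\<Sum>k\<in>{1..K}. (1 - P m) * ((P(m := 0)) k * ?r (P(m := 0)) k)
      + P m * ((P(m := 1)) k * ?r (P(m := 1)) k))"
    unfolding rate_surrogate_def by (rule sum_mono)
  then show ?thesis
    by (simp add: rate_surrogate_def sum.distrib sum_distrib_left)
qed

lemma rate_surrogate_indic_vec: "rate_surrogate K \<Theta> (indic_vec S) \<alpha> \<gamma> = Rsum K \<Theta> (indic_vec S) \<alpha> \<gamma>"
  unfolding rate_surrogate_def Rsum_def interference_plus_noise_def
  by (intro sum.cong) (auto simp: indic_vec_def)

lemma Rsum_le_2_rate_surrogate: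
  assumes P: "\<And>j. j \<in> {1..K} \<Longrightarrow> 0 \<le> P j \<and> P j \<le> 1"
  shows "Rsum K \<Theta> P \<alpha> \<gamma> \<le> 2 * rate_surrogate K \<Theta> P \<alpha> \<gamma>"
  unfolding rate_surrogate_def sum_distrib_left Rsum_def interference_plus_noise_def[symmetric]
proof (rule sum_mono)
  fix k assume k: "k \<in> {1..K}"
  define D where "D = interference_plus_noise K \<Theta> P \<alpha> \<gamma> k"
  define x where "x = beta \<Theta> \<alpha> \<gamma> k k / D"
  have D: "1/2 \<le> D" unfolding D_def by (rule interference_plus_noise_ge_half) (use P in auto)
  have "0 \<le> x" unfolding x_def using D by (simp add: beta_nonneg)
  moreover have "x \<le> 1 / (1/2)" unfolding x_def
    by (intro frac_le) (use D in \<open>simp_all add: beta_le_one\<close>)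
  ultimately have "ln (1 + P k * x) \<le> 2 * (P k * ln (1 + x))"
    using P k by (simp add: ln_one_plus_mult_le)
  then show "ln (1 + P k * beta \<Theta> \<alpha> \<gamma> k k / D) \<le> 2 * (P k * ln (1 + beta \<Theta> \<alpha> \<gamma> k k / D))"
    unfolding x_def by simp
qed

theorem lemma2:
  fixes K :: nat and \<Theta> :: "nat \<Rightarrow> nat \<Rightarrow> real" and P \<alpha> \<gamma> :: "nat \<Rightarrow> real"
  assumes "\<forall>k\<in>{1..K}. 0 \<le> P k \<and> P k \<le> 1"
    and "\<forall>k\<in>{1..K}. -pi \<le> \<alpha> k \<and> \<alpha> k < pi"
    and "\<forall>k\<in>{1..K}. -pi \<le> \<gamma> k \<and> \<gamma> k < pi"
  shows "Rsum K \<Theta> P \<alpha> \<gamma> \<le>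
    2 * Max ((\<lambda>S. Rsum K \<Theta> (indic_vec S) \<alpha> \<gamma>) ` Pow {1..K})"
proof -
  have P: "\<And>k. k \<in> {1..K} \<Longrightarrow> 0 \<le> P k \<and> P k \<le> 1" using assms(1) by blast
  have "\<exists>S\<subseteq>{1..K}. rate_surrogate K \<Theta> P \<alpha> \<gamma> \<le> rate_surrogate K \<Theta> (\<lambda>k. of_bool (k \<in> S)) \<alpha> \<gamma>"
    using finite_atLeastAtMost rate_surrogate_cong rate_surrogate_coordinate_convex P
    by (rule coordinatewise_convex_le_vertex)
  then obtain S where S: "S \<subseteq> {1..K}"
    and "rate_surrogate K \<Theta> P \<alpha> \<gamma> \<le> rate_surrogate K \<Theta> (\<lambda>k. of_bool (k \<in> S)) \<alpha> \<gamma>"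
    by blast
  moreover have "(\<lambda>k. of_bool (k \<in> S)) = indic_vec S" by (auto simp: indic_vec_def)
  ultimately have vertex: "rate_surrogate K \<Theta> P \<alpha> \<gamma> \<le> Rsum K \<Theta> (indic_vec S) \<alpha> \<gamma>"
    by (simp add: rate_surrogate_indic_vec)
  have "Rsum K \<Theta> P \<alpha> \<gamma> \<le> 2 * rate_surrogate K \<Theta> P \<alpha> \<gamma>"
    using P by (rule Rsum_le_2_rate_surrogate)
  also have "\<dots> \<le> 2 * Rsum K \<Theta> (indic_vec S) \<alpha> \<gamma>"
    using vertex by simp
  also have "\<dots> \<le> 2 * Max ((\<lambda>S. Rsum K \<Theta> (indic_vec S) \<alpha> \<gamma>) ` Pow {1..K})"
    using S by (intro mult_left_mono Max_ge) auto
  finally show ?thesis .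
qed

end
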